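(* The constant $2$ in the Lipschitz estimate $h(W_1^\circ,W_2^\circ)\le 2h(W_1,W_2)$ for $\bigcirc:\mathcal{H}^\circ(S^n)\to\mathcal{H}^\circ(S^n)$ is optimal: for every real $r$ with $1<r<2$ there exist $W_1,W_2\in\mathcal{H}^\circ(S^n)$ (e.g. $W_i=H(P_i)$ for suitable $P_1,P_2\in S^n$) such that $r\,h(W_1,W_2)<h(W_1^\circ,W_2^\circ)$.
   Context: $S^n$ is the unit sphere in $\mathbb{R}^{n+1}$, $n\ge1$; $|PQ|=\arccos(P\cdot Q)$. $H(P)=\{Q\in S^n:P\cdot Q\ge0\}$ and $W^\circ=\bigcap_{P\in W}H(P)$. $\mathcal{H}(S^n)$ is the set of non-empty closed subsets of $S^n$ with the Pompeiu-Hausdorff metric $h(A,B)=\max\{\max_{x\in A}\min_{y\in B}|xy|,\ \max_{y\in B}\min_{x\in A}|xy|\}$, and $\mathcal{H}^\circ(S^n)=\{W\in\mathcal{H}(S^n):W^\circ\ne\emptyset\}$. *)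

theory Defs
  imports "HOL-Analysis.Analysis"
begin

text \<open>The unit sphere S^n in a Euclidean space of dimension n+1 is sphere 0 1.
  Spherical (geodesic) distance |PQ| = arccos (P . Q).\<close>
definition sdist :: "'a::euclidean_space \<Rightarrow> 'a \<Rightarrow> real" where
  "sdist P Q = arccos (P \<bullet> Q)"

definition hemi :: "'a::euclidean_space \<Rightarrow> 'a set" where
  "hemi P = {Q \<in> sphere 0 1. P \<bullet> Q \<ge> 0}"

definition polar :: "'a::euclidean_space set \<Rightarrow> 'a set" where
  "polar W = sphere 0 1 \<inter> (\<Inter>P\<in>W. hemi P)"

text \<open>Pompeiu-Hausdorff distance w.r.t. the spherical metric. For non-empty compact
  sets the sup/inf below are attained, so they coincide with the max/min of the paper.\<close>
definition hdist :: "'a::euclidean_space set \<Rightarrow> 'a set \<Rightarrow> real" where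
  "hdist A B = max (SUP x\<in>A. INF y\<in>B. sdist x y) (SUP y\<in>B. INF x\<in>A. sdist x y)"

definition HS :: "'a::euclidean_space set set" where
  "HS = {W. W \<subseteq> sphere 0 1 \<and> W \<noteq> {} \<and> closed W}"

definition HSo :: "'a::euclidean_space set set" where
  "HSo = {W \<in> HS. polar W \<noteq> {}}"

end

theory Submission
  imports Defs
begin

text \<open>Take orthonormal \<open>u, v\<close> and \<open>w = (v - u)/\<surd>2\<close>. The sets \<open>W\<^sub>1 = {u, w}\<close> and
  \<open>W\<^sub>2 = {u, -u}\<close> are at Hausdorff distance at most \<open>\<pi>/4\<close>, since \<open>|w(-u)| = \<pi>/4\<close>.
  Their polars, however, are at distance at least \<open>\<pi>/2\<close>: \<open>-v \<in> W\<^sub>2\<degree>\<close>, while every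
  point of \<open>W\<^sub>1\<degree>\<close> has non-negative inner product with \<open>v = u + \<surd>2 w\<close>.\<close>

lemma sdist_commute: "sdist x y = sdist y x"
  by (simp add: sdist_def inner_commute)

lemma sdist_bounds:
  fixes x y :: "'a::euclidean_space"
  assumes "norm x = 1" "norm y = 1"
  shows "0 \<le> sdist x y" "sdist x y \<le> pi"
proof -
  have "\<bar>x \<bullet> y\<bar> \<le> 1" using Cauchy_Schwarz_ineq2[of x y] assms by simp
  then show "0 \<le> sdist x y" "sdist x y \<le> pi"
    unfolding sdist_def by (simp_all add: arccos_lbound arccos_ubound abs_le_iff)
qed

lemma bdd_below_sdist_image:
  fixes A :: "'a::euclidean_space set"
  assumes "A \<subseteq> sphere 0 1" "norm y = 1"
  shows "bdd_below ((\<lambda>x. sdist x y) ` A)"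
proof (rule bdd_belowI2)
  fix x assume "x \<in> A"
  then have "norm x = 1" using assms(1) by auto
  then show "0 \<le> sdist x y" using assms(2) by (rule sdist_bounds)
qed

lemma sdist_ge_pi_half_if_inner_nonpos:
  fixes x y :: "'a::euclidean_space"
  assumes "norm x = 1" "norm y = 1" "x \<bullet> y \<le> 0"
  shows "pi / 2 \<le> sdist x y"
proof -
  have "-1 \<le> x \<bullet> y" using Cauchy_Schwarz_ineq2[of x y] assms(1,2) by simp
  then have "arccos 0 \<le> arccos (x \<bullet> y)" using assms(3) by (intro arccos_le_arccos) auto
  then show ?thesis by (simp add: sdist_def)
qed

lemma hdist_le_if_mutually_close:
  fixes A B :: "'a::euclidean_space set"
  assumes A: "A \<subseteq> sphere 0 1" and B: "B \<subseteq> sphere 0 1" and "A \<noteq> {}" "B \<noteq> {}"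
    and "\<And>x. x \<in> A \<Longrightarrow> \<exists>y\<in>B. sdist x y \<le> d"
    and "\<And>y. y \<in> B \<Longrightarrow> \<exists>x\<in>A. sdist x y \<le> d"
  shows "hdist A B \<le> d"
proof -
  have "(SUP x\<in>A. INF y\<in>B. sdist x y) \<le> d"
  proof (rule cSUP_least[OF \<open>A \<noteq> {}\<close>])
    fix x assume "x \<in> A"
    with assms(5) obtain y where "y \<in> B" "sdist x y \<le> d" by blast
    moreover have "bdd_below ((\<lambda>y. sdist x y) ` B)"
      using bdd_below_sdist_image[OF B, of x] \<open>x \<in> A\<close> A by (auto simp: sdist_commute)
    ultimately show "(INF y\<in>B. sdist x y) \<le> d" by (intro cINF_lower2)
  qed
  moreover have "(SUP y\<in>B. INF x\<in>A. sdist x y) \<le> d"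
  proof (rule cSUP_least[OF \<open>B \<noteq> {}\<close>])
    fix y assume "y \<in> B"
    with assms(6) obtain x where "x \<in> A" "sdist x y \<le> d" by blast
    moreover have "bdd_below ((\<lambda>x. sdist x y) ` A)"
      using bdd_below_sdist_image[OF A, of y] \<open>y \<in> B\<close> B by auto
    ultimately show "(INF x\<in>A. sdist x y) \<le> d" by (intro cINF_lower2)
  qed
  ultimately show ?thesis by (simp add: hdist_def)
qed

lemma hdist_ge_if_far_point:
  fixes A B :: "'a::euclidean_space set"
  assumes A: "A \<subseteq> sphere 0 1" and B: "B \<subseteq> sphere 0 1" and "A \<noteq> {}" "y \<in> B"
    and far: "\<And>x. x \<in> A \<Longrightarrow> d \<le> sdist x y"
  shows "d \<le> hdist A B"
proof -
  obtain x0 where "x0 \<in> A" using \<open>A \<noteq> {}\<close> by blast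
  have "(INF x\<in>A. sdist x z) \<le> pi" if "z \<in> B" for z
  proof -
    have nz: "norm z = 1" using that B by auto
    have "(INF x\<in>A. sdist x z) \<le> sdist x0 z"
      using bdd_below_sdist_image[OF A nz] \<open>x0 \<in> A\<close> by (rule cINF_lower)
    also have "\<dots> \<le> pi" using \<open>x0 \<in> A\<close> A nz by (intro sdist_bounds(2)) auto
    finally show ?thesis .
  qed
  then have "bdd_above ((\<lambda>z. INF x\<in>A. sdist x z) ` B)" by (intro bdd_aboveI2)
  then have "(INF x\<in>A. sdist x y) \<le> (SUP z\<in>B. INF x\<in>A. sdist x z)"
    by (rule cSUP_upper[OF \<open>y \<in> B\<close>])
  moreover have "d \<le> (INF x\<in>A. sdist x y)" using \<open>A \<noteq> {}\<close> far by (rule cINF_greatest)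
  ultimately show ?thesis by (simp add: hdist_def)
qed

lemma finite_in_HSo:
  assumes "finite W" "W \<subseteq> sphere 0 1" "W \<noteq> {}" "p \<in> polar W"
  shows "W \<in> HSo"
  using assms by (auto simp: HSo_def HS_def intro: finite_imp_closed)

lemma polar_subset_sphere: "polar W \<subseteq> sphere 0 1"
  by (simp add: polar_def)

lemma orthonormal_pair_exists:
  assumes "DIM('a) \<ge> 2"
  obtains u v :: "'a::euclidean_space" where "norm u = 1" "norm v = 1" "u \<bullet> v = 0"
proof -
  have "\<not> card (Basis :: 'a set) \<le> 1" using assms by simp
  then obtain u v :: 'a where "u \<in> Basis" "v \<in> Basis" "u \<noteq> v"
    using card_le_Suc0_iff_eq[OF finite_Basis] by auto
  then show ?thesis using that[of u v] by (auto simp: inner_not_same_Basis)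
qed

definition diag_unit :: "'a::euclidean_space \<Rightarrow> 'a \<Rightarrow> 'a" where
  "diag_unit u v = (1 / sqrt 2) *\<^sub>R (v - u)"

lemma diag_unit_inner:
  fixes u v :: "'a::euclidean_space"
  assumes "norm u = 1" "norm v = 1" "u \<bullet> v = 0"
  shows "norm (diag_unit u v) = 1" "diag_unit u v \<bullet> u = - (1 / sqrt 2)"
    "diag_unit u v \<bullet> v = 1 / sqrt 2"
proof -
  have uu: "u \<bullet> u = 1" and vv: "v \<bullet> v = 1" using assms(1,2) by (simp_all add: dot_square_norm)
  have "diag_unit u v \<bullet> diag_unit u v = 1"
    by (simp add: diag_unit_def inner_diff_left inner_diff_right uu vv assms(3)
        inner_commute[of v u] power2_eq_square[symmetric])
  then show "norm (diag_unit u v) = 1" by (simp add: norm_eq_sqrt_inner)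
  show "diag_unit u v \<bullet> u = - (1 / sqrt 2)" "diag_unit u v \<bullet> v = 1 / sqrt 2"
    by (simp_all add: diag_unit_def inner_diff_left uu vv assms(3) inner_commute[of v u])
qed

context
  fixes u v :: "'a::euclidean_space"
  assumes nu: "norm u = 1" and nv: "norm v = 1" and uv: "u \<bullet> v = 0"
begin

lemma pair_subset_sphere: "{u, diag_unit u v} \<subseteq> sphere 0 1" "{u, -u} \<subseteq> sphere 0 1"
  using nu diag_unit_inner[OF nu nv uv] by auto

lemma in_polar_pair: "v \<in> polar {u, diag_unit u v}" "-v \<in> polar {u, -u}"
  by (simp_all add: polar_def hemi_def nv uv diag_unit_inner[OF nu nv uv])

lemma pair_in_HSo: "{u, diag_unit u v} \<in> HSo" "{u, -u} \<in> HSo"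
  by (rule finite_in_HSo[OF _ pair_subset_sphere(1) _ in_polar_pair(1)]; simp)
     (rule finite_in_HSo[OF _ pair_subset_sphere(2) _ in_polar_pair(2)]; simp)

lemma hdist_pair_le: "hdist {u, diag_unit u v} {u, -u} \<le> pi / 4"
proof -
  have "sdist u u = 0" "sdist (diag_unit u v) (-u) = pi / 4"
    using nu by (simp_all add: sdist_def dot_square_norm diag_unit_inner[OF nu nv uv]
        arccos_one_over_sqrt_2)
  then show ?thesis
    using pi_gt_zero by (intro hdist_le_if_mutually_close[OF pair_subset_sphere]) auto
qed

lemma hdist_polar_pair_ge: "pi / 2 \<le> hdist (polar {u, diag_unit u v}) (polar {u, -u})"
proof (rule hdist_ge_if_far_point[OF polar_subset_sphere polar_subset_sphere _ in_polar_pair(2)])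
  fix x assume x: "x \<in> polar {u, diag_unit u v}"
  then have "u \<bullet> x \<ge> 0" "diag_unit u v \<bullet> x \<ge> 0" by (auto simp: polar_def hemi_def)
  then have "v \<bullet> x \<ge> 0" by (simp add: diag_unit_def inner_diff_left field_simps)
  moreover have "norm x = 1" using x by (simp add: polar_def)
  ultimately show "pi / 2 \<le> sdist x (-v)"
    using nv by (intro sdist_ge_pi_half_if_inner_nonpos) (simp_all add: inner_commute)
qed (use in_polar_pair(1) in blast)

end

theorem claim1:
  fixes r :: real
  assumes "DIM('a::euclidean_space) \<ge> 2"
    and "1 < r" and "r < 2"
  shows "\<exists>W1 W2 :: 'a set. W1 \<in> HSo \<and> W2 \<in> HSo \<and>
           r * hdist W1 W2 < hdist (polar W1) (polar W2)"
proof -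
  obtain u v :: 'a where uv: "norm u = 1" "norm v = 1" "u \<bullet> v = 0"
    using orthonormal_pair_exists[OF assms(1)] .
  define W1 where "W1 = {u, diag_unit u v}"
  define W2 where "W2 = {u, -u}"
  have "r * hdist W1 W2 \<le> r * (pi / 4)"
    using hdist_pair_le[OF uv] assms(2) by (simp add: W1_def W2_def)
  also have "\<dots> < 2 * (pi / 4)" using assms(3) pi_gt_zero by (intro mult_strict_right_mono) auto
  also have "\<dots> \<le> hdist (polar W1) (polar W2)"
    using hdist_polar_pair_ge[OF uv] by (simp add: W1_def W2_def)
  finally show ?thesis using pair_in_HSo[OF uv] by (auto simp: W1_def W2_def)
qed

end
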